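(* Let $\lambda<0$ and let $p(x;\theta)=(1+\lambda\,\theta\cdot F(x))_+^{1/\lambda}e^{-\varphi(\theta)}$, $\theta\in\Theta\subset\mathbb{R}^d$, be a $\lambda$-exponential family on a state space $\mathcal{X}$ with reference measure $\nu$, satisfying the standing assumptions described in the context. Let $x_1,\ldots,x_n\in\mathcal{S}$ be data points and put $y_i=F(x_i)\in\mathbb{R}^d$. If $\hat\theta\in\Theta$ is a maximum likelihood estimate, i.e. $\hat\theta$ maximizes $$\ell(\theta)=\sum_{i=1}^n\Big(\tfrac{1}{\lambda}\log(1+\lambda\,\theta\cdot y_i)-\varphi(\theta)\Big)$$ over $\Theta$, then $\hat\eta:=\nabla^{(\lambda)}\varphi(\hat\theta)$ satisfies $$\hat\eta=\sum_{i=1}^n w_i(\hat\theta)\,y_i,\qquad w_i(\theta):=\frac{1/(1+\lambda\,\theta\cdot y_i)}{\sum_{j=1}^n 1/(1+\lambda\,\theta\cdot y_j)},\quad i=1,\ldots,n.$$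
   Context: Setting: $\mathcal{X}$ is a state space with reference measure $\nu$, $\lambda\in\mathbb{R}\setminus\{0\}$ is fixed, $F=(F_1,\ldots,F_d):\mathcal{X}\to\mathbb{R}^d$ is a vector of statistics, $z_+=\max\{z,0\}$, and the $\lambda$-exponential family is $p(x;\theta)=(1+\lambda\theta\cdot F(x))_+^{1/\lambda}e^{-\varphi(\theta)}$, where the potential $\varphi(\theta)$ is defined by the normalization $\int_{\mathcal{X}}p(x;\theta)\,d\nu(x)=1$. The $\lambda$-gradient of a differentiable function $f$ is $\nabla^{(\lambda)}f(\theta):=\nabla f(\theta)/(1-\lambda\nabla f(\theta)\cdot\theta)$. The $\lambda$-conjugate of $f$ is $f^{(\lambda)}(y)=\sup_x\{\frac1\lambda\log(1+\lambda x\cdot y)-f(x)\}$. Standing assumptions: $\lambda<0$; $\Theta=\{\theta\in\mathbb{R}^d:\int(1+\lambda\theta\cdot F(x))_+^{1/\lambda}d\nu(x)<\infty\}$ is the natural parameter set; the family satisfies the regularity condition of Wong and Zhang (2022, Condition III.10), under which $\varphi$ is differentiable on $\Theta$ with $1-\lambda\nabla\varphi(\theta)\cdot\theta>0$, the dual potential $\psi(\eta):=\sup_{\theta'\in\Theta}\{\frac1\lambda\log(1+\lambda\theta'\cdot\eta)-\varphi(\theta')\}$ is such that $\frac1\lambda(e^{\lambda\psi}-1)$ is strictly convex on $\Xi$, and $\nabla^{(\lambda)}\varphi:\Theta\to\Xi$ is a diffeomorphism with inverse $\nabla^{(\lambda)}\psi$; moreover the dual parameter set $\Xi:=\nabla^{(\lambda)}\varphi(\Theta)$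 is convex and contains the common support $\mathcal{S}:=\{x\in\mathcal{X}:p(x;\theta)>0\}$ of the family. *)

theory Defs
  imports "HOL-Analysis.Analysis"
begin

text \<open>For lam < 0 and base 0 the value is 0 (Isabelle: 0 powr a = 0), which is the
  standard convention: outside the support the density vanishes.\<close>
definition lexp_base :: "real \<Rightarrow> ('a \<Rightarrow> 'v::euclidean_space) \<Rightarrow> 'v \<Rightarrow> 'a \<Rightarrow> real" where
  "lexp_base lam F \<theta> x = (max (1 + lam * (\<theta> \<bullet> F x)) 0) powr (1 / lam)"

definition nat_params :: "real \<Rightarrow> 'a measure \<Rightarrow> ('a \<Rightarrow> 'v::euclidean_space) \<Rightarrow> 'v set" where
  "nat_params lam \<nu> F = {\<theta>. (\<integral>\<^sup>+ x. ennreal (lexp_base lam F \<theta> x) \<partial>\<nu>) < \<infinity>}"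

definition lpot :: "real \<Rightarrow> 'a measure \<Rightarrow> ('a \<Rightarrow> 'v::euclidean_space) \<Rightarrow> 'v \<Rightarrow> real" where
  "lpot lam \<nu> F \<theta> = ln (\<integral>x. lexp_base lam F \<theta> x \<partial>\<nu>)"

definition ldens :: "real \<Rightarrow> 'a measure \<Rightarrow> ('a \<Rightarrow> 'v::euclidean_space) \<Rightarrow> 'v \<Rightarrow> 'a \<Rightarrow> real" where
  "ldens lam \<nu> F \<theta> x = lexp_base lam F \<theta> x * exp (- lpot lam \<nu> F \<theta>)"

definition grad :: "('v::euclidean_space \<Rightarrow> real) \<Rightarrow> 'v \<Rightarrow> 'v" where
  "grad f \<theta> = (SOME g. (f has_derivative (\<lambda>h. g \<bullet> h)) (at \<theta>))"

definition lgrad :: "real \<Rightarrow> ('v::euclidean_space \<Rightarrow> real) \<Rightarrow> 'v \<Rightarrow> 'v" where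
  "lgrad lam f \<theta> = (1 / (1 - lam * (grad f \<theta> \<bullet> \<theta>))) *\<^sub>R grad f \<theta>"

definition ldual :: "real \<Rightarrow> 'v set \<Rightarrow> ('v::euclidean_space \<Rightarrow> real) \<Rightarrow> 'v \<Rightarrow> real" where
  "ldual lam \<Theta> \<phi> \<eta> = (SUP \<theta>'\<in>\<Theta>. (1 / lam) * ln (1 + lam * (\<theta>' \<bullet> \<eta>)) - \<phi> \<theta>')"

definition strict_convex_on :: "'v::real_vector set \<Rightarrow> ('v \<Rightarrow> real) \<Rightarrow> bool" where
  "strict_convex_on S f \<longleftrightarrow>
     (\<forall>x\<in>S. \<forall>y\<in>S. \<forall>t::real. x \<noteq> y \<and> 0 < t \<and> t < 1 \<longrightarrow>
        f ((1 - t) *\<^sub>R x + t *\<^sub>R y) < (1 - t) * f x + t * f y)"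

text \<open>Log-likelihood of data y_0..y_(n-1) (only used where all 1 + lam theta.y_i > 0).\<close>
definition loglik :: "real \<Rightarrow> ('v::euclidean_space \<Rightarrow> real) \<Rightarrow> nat \<Rightarrow> (nat \<Rightarrow> 'v) \<Rightarrow> 'v \<Rightarrow> real" where
  "loglik lam \<phi> n y \<theta> = (\<Sum>i<n. (1 / lam) * ln (1 + lam * (\<theta> \<bullet> y i)) - \<phi> \<theta>)"

definition mle_weight :: "real \<Rightarrow> nat \<Rightarrow> (nat \<Rightarrow> 'v::euclidean_space) \<Rightarrow> 'v \<Rightarrow> nat \<Rightarrow> real" where
  "mle_weight lam n y \<theta> i =
     (1 / (1 + lam * (\<theta> \<bullet> y i))) / (\<Sum>j<n. 1 / (1 + lam * (\<theta> \<bullet> y j)))"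

end

theory Submission
  imports Defs
begin

text \<open>Since the data lie in the common support, every \<open>1 + \<lambda> \<theta>\<cdot>y\<^sub>i\<close> is positive on \<open>\<Theta>\<close>,
  so \<open>\<ell>\<close> is differentiable there and the MLE is an interior critical point:
  \<open>n \<nabla>\<phi>(\<theta>) = \<Sum>\<^sub>i y\<^sub>i / a\<^sub>i\<close> with \<open>a\<^sub>i = 1 + \<lambda> \<theta>\<cdot>y\<^sub>i\<close>. Pairing this with \<open>\<theta>\<close> and using
  \<open>\<lambda> \<theta>\<cdot>y\<^sub>i = a\<^sub>i - 1\<close> gives \<open>1 - \<lambda> \<nabla>\<phi>(\<theta>)\<cdot>\<theta> = (1/n) \<Sum>\<^sub>i 1/a\<^sub>i\<close>, which is exactly the
  normalisation turning \<open>\<nabla>\<phi>\<close> into the weighted mean.\<close>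

lemma grad_has_derivative:
  fixes f :: "'v::euclidean_space \<Rightarrow> real"
  assumes "f differentiable (at t)"
  shows "(f has_derivative (\<lambda>h. grad f t \<bullet> h)) (at t)"
proof -
  obtain D where D: "(f has_derivative D) (at t)"
    using assms unfolding differentiable_def by blast
  define g where "g = (\<Sum>b\<in>Basis. D b *\<^sub>R b)"
  have "D h = g \<bullet> h" for h
  proof -
    have "D h = D (\<Sum>b\<in>Basis. (h \<bullet> b) *\<^sub>R b)"
      by (simp add: euclidean_representation)
    also have "\<dots> = (\<Sum>b\<in>Basis. (h \<bullet> b) * D b)"
      using has_derivative_linear[OF D] by (simp add: linear_sum linear_scale)
    also have "\<dots> = g \<bullet> h"
      unfolding g_def by (simp add: inner_sum_right inner_commute mult.commute)
    finally show ?thesis .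
  qed
  with D have "\<exists>g. (f has_derivative (\<lambda>h. g \<bullet> h)) (at t)"
    by (metis (no_types, lifting) ext)
  then show ?thesis
    unfolding grad_def by (rule someI_ex)
qed

lemma lexp_base_pos_iff: "0 < lexp_base lam F \<theta> x \<longleftrightarrow> 0 < 1 + lam * (\<theta> \<bullet> F x)"
  unfolding lexp_base_def by (auto simp: max_def)

lemma ldens_pos_iff: "0 < ldens lam \<nu> F \<theta> x \<longleftrightarrow> 0 < 1 + lam * (\<theta> \<bullet> F x)"
  unfolding ldens_def by (simp add: zero_less_mult_iff lexp_base_pos_iff)

lemma has_derivative_loglik:
  fixes y :: "nat \<Rightarrow> 'v::euclidean_space"
  assumes "lam \<noteq> 0"
    and pos: "\<And>i. i < n \<Longrightarrow> 0 < 1 + lam * (\<theta> \<bullet> y i)"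
    and d\<phi>: "(\<phi> has_derivative (\<lambda>h. G \<bullet> h)) (at \<theta>)"
  shows "(loglik lam \<phi> n y has_derivative
           (\<lambda>h. ((\<Sum>i<n. (1 / (1 + lam * (\<theta> \<bullet> y i))) *\<^sub>R y i) - real n *\<^sub>R G) \<bullet> h)) (at \<theta>)"
proof -
  define a where "a i = 1 + lam * (\<theta> \<bullet> y i)" for i
  have "((\<lambda>\<theta>. (1 / lam) * ln (1 + lam * (\<theta> \<bullet> y i)) - \<phi> \<theta>) has_derivative
          (\<lambda>h. (h \<bullet> y i) / a i - G \<bullet> h)) (at \<theta>)" if "i < n" for i
  proof -
    have "((\<lambda>\<theta>. ln (1 + lam * (\<theta> \<bullet> y i))) has_derivative (\<lambda>h. lam * (h \<bullet> y i) / a i)) (at \<theta>)"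
      using pos[OF that] unfolding a_def
      by (auto intro!: derivative_eq_intros simp: divide_inverse mult.commute)
    from has_derivative_diff[OF has_derivative_mult_right[OF this, of "1 / lam"] d\<phi>]
    show ?thesis
      using \<open>lam \<noteq> 0\<close> by simp
  qed
  then have "(loglik lam \<phi> n y has_derivative
               (\<lambda>h. \<Sum>i<n. (h \<bullet> y i) / a i - G \<bullet> h)) (at \<theta>)"
    unfolding loglik_def by (intro has_derivative_sum) auto
  then show ?thesis
    by (rule has_derivative_eq_rhs)
      (simp add: fun_eq_iff a_def inner_diff_right inner_sum_right sum_subtractf inner_commute)
qed

lemma loglik_max_first_order:
  fixes y :: "nat \<Rightarrow> 'v::euclidean_space"
  assumes "lam \<noteq> 0" and "open T" and "\<theta> \<in> T"
    and pos: "\<And>i. i < n \<Longrightarrow> 0 < 1 + lam * (\<theta> \<bullet> y i)"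
    and diff: "\<phi> differentiable (at \<theta>)"
    and max: "\<forall>\<theta>'\<in>T. loglik lam \<phi> n y \<theta>' \<le> loglik lam \<phi> n y \<theta>"
  shows "real n *\<^sub>R grad \<phi> \<theta> = (\<Sum>i<n. (1 / (1 + lam * (\<theta> \<bullet> y i))) *\<^sub>R y i)"
proof -
  define V where "V = (\<Sum>i<n. (1 / (1 + lam * (\<theta> \<bullet> y i))) *\<^sub>R y i) - real n *\<^sub>R grad \<phi> \<theta>"
  have "(loglik lam \<phi> n y has_derivative (\<lambda>h. V \<bullet> h)) (at \<theta>)"
    unfolding V_def
    using has_derivative_loglik[OF \<open>lam \<noteq> 0\<close> pos grad_has_derivative[OF diff]] .
  then have "(\<lambda>h. V \<bullet> h) = (\<lambda>h. 0)"
    using differential_zero_maxmin[OF \<open>\<theta> \<in> T\<close> \<open>open T\<close>] max by blast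
  then have "V \<bullet> V = 0"
    by meson
  then show ?thesis
    unfolding V_def by simp
qed

lemma lgrad_eq_weighted_mean:
  fixes y :: "nat \<Rightarrow> 'v::euclidean_space"
  assumes "0 < n"
    and pos: "\<And>i. i < n \<Longrightarrow> 0 < 1 + lam * (\<theta> \<bullet> y i)"
    and crit: "real n *\<^sub>R grad f \<theta> = (\<Sum>i<n. (1 / (1 + lam * (\<theta> \<bullet> y i))) *\<^sub>R y i)"
  shows "lgrad lam f \<theta> = (\<Sum>i<n. mle_weight lam n y \<theta> i *\<^sub>R y i)"
proof -
  define a where "a i = 1 + lam * (\<theta> \<bullet> y i)" for i
  define s where "s = (\<Sum>i<n. 1 / a i)"
  have "real n * (grad f \<theta> \<bullet> \<theta>) = (\<Sum>i<n. (\<theta> \<bullet> y i) / a i)"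
    using arg_cong[OF crit, of "\<lambda>v. v \<bullet> \<theta>"] unfolding a_def
    by (simp add: inner_sum_right inner_commute)
  then have "real n * (lam * (grad f \<theta> \<bullet> \<theta>)) = (\<Sum>i<n. lam * (\<theta> \<bullet> y i) / a i)"
    by (simp add: sum_distrib_left mult.left_commute)
  also have "\<dots> = (\<Sum>i<n. 1 - 1 / a i)"
  proof (intro sum.cong refl)
    fix i assume "i \<in> {..<n}"
    then have "a i \<noteq> 0"
      using pos unfolding a_def by (metis lessThan_iff less_irrefl)
    then show "lam * (\<theta> \<bullet> y i) / a i = 1 - 1 / a i"
      by (simp add: a_def field_simps)
  qed
  also have "\<dots> = real n - s"
    unfolding s_def by (simp add: sum_subtractf)
  finally have "1 - lam * (grad f \<theta> \<bullet> \<theta>) = s / real n"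
    using \<open>0 < n\<close> by (simp add: field_simps)
  then have "lgrad lam f \<theta> = (1 / s) *\<^sub>R (real n *\<^sub>R grad f \<theta>)"
    unfolding lgrad_def by simp
  also have "\<dots> = (\<Sum>i<n. mle_weight lam n y \<theta> i *\<^sub>R y i)"
    unfolding crit mle_weight_def s_def a_def
    by (simp add: scaleR_sum_right divide_inverse mult.commute)
  finally show ?thesis .
qed

theorem proposition1:
  fixes lam :: real and \<nu> :: "'a measure" and F :: "'a \<Rightarrow> 'v::euclidean_space"
    and S :: "'a set" and n :: nat and x :: "nat \<Rightarrow> 'a" and \<theta>hat :: 'v
  defines "\<Theta> \<equiv> nat_params lam \<nu> F"
    and "\<phi> \<equiv> lpot lam \<nu> F"
    and "\<Xi> \<equiv> lgrad lam (lpot lam \<nu> F) ` nat_params lam \<nu> F"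
    and "\<psi> \<equiv> ldual lam (nat_params lam \<nu> F) (lpot lam \<nu> F)"
    and "y \<equiv> (\<lambda>i. F (x i))"
  assumes lam_neg: "lam < 0"
    and F_meas: "F \<in> borel_measurable \<nu>"
    \<comment> \<open>standing regularity assumptions (Wong--Zhang 2022, Condition III.10)\<close>
    and Theta_open: "open \<Theta>"
    and norm_pos: "\<forall>\<theta>\<in>\<Theta>. 0 < (\<integral>x. lexp_base lam F \<theta> x \<partial>\<nu>)"
    and phi_diff: "\<forall>\<theta>\<in>\<Theta>. \<phi> differentiable (at \<theta>)"
    and phi_pos: "\<forall>\<theta>\<in>\<Theta>. 1 - lam * (grad \<phi> \<theta> \<bullet> \<theta>) > 0"
    and psi_conv: "strict_convex_on \<Xi> (\<lambda>\<eta>. (1 / lam) * (exp (lam * \<psi> \<eta>) - 1))"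
    and diffeo: "bij_betw (lgrad lam \<phi>) \<Theta> \<Xi>"
      "lgrad lam \<phi> differentiable_on \<Theta>"
      "\<forall>\<eta>\<in>\<Xi>. \<psi> differentiable (at \<eta>)"
      "lgrad lam \<psi> differentiable_on \<Xi>"
      "\<forall>\<theta>\<in>\<Theta>. lgrad lam \<psi> (lgrad lam \<phi> \<theta>) = \<theta>"
      "\<forall>\<eta>\<in>\<Xi>. lgrad lam \<phi> (lgrad lam \<psi> \<eta>) = \<eta>"
    and Xi_convex: "convex \<Xi>"
    and common_support: "\<forall>\<theta>\<in>\<Theta>. {z \<in> space \<nu>. ldens lam \<nu> F \<theta> z > 0} = S"
    and support_in_Xi: "F ` S \<subseteq> \<Xi>"
    \<comment> \<open>data and maximum likelihood estimate\<close>
    and n_pos: "0 < n"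
    and data: "\<forall>i<n. x i \<in> S"
    and mle_in: "\<theta>hat \<in> \<Theta>"
    and mle_max: "\<forall>\<theta>\<in>\<Theta>. (\<forall>i<n. 0 < 1 + lam * (\<theta> \<bullet> y i)) \<longrightarrow>
                     loglik lam \<phi> n y \<theta> \<le> loglik lam \<phi> n y \<theta>hat"
  shows "lgrad lam \<phi> \<theta>hat = (\<Sum>i<n. mle_weight lam n y \<theta>hat i *\<^sub>R y i)"
proof -
  have data_pos: "0 < 1 + lam * (\<theta> \<bullet> y i)" if "\<theta> \<in> \<Theta>" and "i < n" for \<theta> i
    using common_support data that unfolding y_def by (auto simp: ldens_pos_iff)
  have "\<forall>\<theta>\<in>\<Theta>. loglik lam \<phi> n y \<theta> \<le> loglik lam \<phi> n y \<theta>hat"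
    using mle_max data_pos by blast
  with lam_neg Theta_open mle_in data_pos phi_diff
  have "real n *\<^sub>R grad \<phi> \<theta>hat = (\<Sum>i<n. (1 / (1 + lam * (\<theta>hat \<bullet> y i))) *\<^sub>R y i)"
    by (intro loglik_max_first_order) auto
  with n_pos mle_in data_pos show ?thesis
    by (intro lgrad_eq_weighted_mean) auto
qed

end
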